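(* Let $F\in\mathbb{R}^{n\times n}$, $C\in\mathbb{R}^{m\times n}$, and let $\Sigma\in\mathbb{R}^{m\times m}$ be symmetric positive definite with symmetric square root $\Sigma^{1/2}$. Let $\alpha,\bar v>0$, $\bar\omega=\alpha+\bar v$, $b\in(0,1)$ and $\gamma>0$. Suppose $(\mathcal{P},M)$, with $\mathcal{P}\in\mathbb{R}^{n\times n}$ symmetric and $M\in\mathbb{R}^{n\times m}$, solves $$\min_{\mathcal{P},M}\ -\log\det\mathcal{P}$$ subject to $\mathcal{P}\succ0$, $$\begin{bmatrix} b\mathcal{P} & F^T \mathcal{P} & 0 & 0 & 0 & 0\\ \mathcal{P} F & \mathcal{P} & \mathcal{P} & -M \Sigma^{1/2} & 0 & 0\\ 0 & \mathcal{P} & \tfrac{1-b}{\bar{\omega}}I & 0 & 0 & 0\\ 0 & -\Sigma^{1/2}M^T & 0 & \tfrac{1-b}{\bar{\omega}}I & 0 & 0\\ 0 & 0 & 0 & 0 & I & 0\\ 0 & 0 & 0 & 0 & 0 & I \end{bmatrix}\succeq 0,$$ and $$\begin{bmatrix} \mathcal{P} & 0 & 0 & F^T\mathcal{P} - C^TM^T & C^T\\ 0 & \gamma^2I & 0 & -M^T & I\\ 0 & 0 & \gamma^2I & \mathcal{P} & 0\\ \mathcal{P}F-MC & -M & \mathcal{P} & \mathcal{P} & 0\\ C & I & 0 & 0 & I \end{bmatrix}\succeq 0.$$ Set $L=\mathcal{P}^{-1}M$. Then: (i) every trajectory of $e_{k+1}=Fe_k-L\Sigma^{1/2}\zeta_k+v_k$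 with $e_1=0$ and $\|\zeta_k\|^2\le\alpha$, $\|v_k\|^2\le\bar v$ for all $k$ satisfies $e_k^T\mathcal{P}e_k\le1$; (ii) the $H_\infty$ gain from $(\eta_k^T,v_k^T)^T$ to $r_k=Ce_k+\eta_k$ of the system $e_{k+1}=(F-LC)e_k-L\eta_k+v_k$ is at most $\gamma$; (iii) the ellipsoid $\{e:e^T\mathcal{P}e\le1\}$ has minimal volume among all ellipsoids $\{e:e^T\mathcal{P}'e\le 1\}$ arising from feasible pairs $(\mathcal{P}',M')$ of these constraints.
   Context: The system is the estimation-error dynamics of a Luenberger observer with gain $L$. The normalized residual is $\zeta_k=\Sigma^{-1/2}(Ce_k+\eta_k+\delta_k)$, where $\delta_k$ is a sensor attack. The threshold $\alpha$ is that of a chi-squared detector that alarms when $\|\zeta_k\|^2>\alpha$. The residual covariance $\Sigma$ is treated as a given fixed matrix. The volume of $\{e:e^T\mathcal{P}e\le1\}$ is proportional to $(\det\mathcal{P})^{-1/2}$. *)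

theory Defs
  imports "HOL-Analysis.Analysis"
begin

text \<open>Matrices are HOL-Analysis matrices: a matrix in R^(r x c) is of type real^'c^'r.
  Symmetric matrices, positive definiteness and positive semidefiniteness of the
  (symmetric) block matrices are expressed via their quadratic forms.\<close>

definition sym_mat :: "real^'n^'n \<Rightarrow> bool" where
  "sym_mat A \<longleftrightarrow> transpose A = A"

definition pos_def :: "real^'n^'n \<Rightarrow> bool" where
  "pos_def A \<longleftrightarrow> sym_mat A \<and> (\<forall>x. x \<noteq> 0 \<longrightarrow> x \<bullet> (A *v x) > 0)"

text \<open>First LMI (6x6 block matrix) is PSD: its quadratic form, written out blockwise
  as sum over i,j of x_i' A_ij x_j, is nonnegative. Block sizes n,n,n,m,n,n.\<close>
definition lmi1 ::
  "real^'n^'n \<Rightarrow> real^'m^'m \<Rightarrow> real \<Rightarrow> real \<Rightarrow> real^'n^'n \<Rightarrow> real^'m^'n \<Rightarrow> bool" where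
  "lmi1 F S b \<omega> P M \<longleftrightarrow>
    (\<forall>(x1::real^'n) (x2::real^'n) (x3::real^'n) (x4::real^'m) (x5::real^'n) (x6::real^'n).
       0 \<le> b * (x1 \<bullet> (P *v x1)) + x1 \<bullet> ((transpose F ** P) *v x2)
          + x2 \<bullet> ((P ** F) *v x1) + x2 \<bullet> (P *v x2) + x2 \<bullet> (P *v x3)
          - x2 \<bullet> ((M ** S) *v x4)
          + x3 \<bullet> (P *v x2) + ((1 - b) / \<omega>) * (x3 \<bullet> x3)
          - x4 \<bullet> ((S ** transpose M) *v x2) + ((1 - b) / \<omega>) * (x4 \<bullet> x4)
          + x5 \<bullet> x5 + x6 \<bullet> x6)"

definition lmi2 ::
  "real^'n^'n \<Rightarrow> real^'n^'m \<Rightarrow> real \<Rightarrow> real^'n^'n \<Rightarrow> real^'m^'n \<Rightarrow> bool" where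
  "lmi2 F C \<gamma> P M \<longleftrightarrow>
    (\<forall>(x1::real^'n) (x2::real^'m) (x3::real^'n) (x4::real^'n) (x5::real^'m).
       0 \<le> x1 \<bullet> (P *v x1) + x1 \<bullet> ((transpose F ** P - transpose C ** transpose M) *v x4)
          + x1 \<bullet> (transpose C *v x5)
          + \<gamma>\<^sup>2 * (x2 \<bullet> x2) - x2 \<bullet> (transpose M *v x4) + x2 \<bullet> x5
          + \<gamma>\<^sup>2 * (x3 \<bullet> x3) + x3 \<bullet> (P *v x4)
          + x4 \<bullet> ((P ** F - M ** C) *v x1) - x4 \<bullet> (M *v x2) + x4 \<bullet> (P *v x3) + x4 \<bullet> (P *v x4)
          + x5 \<bullet> (C *v x1) + x5 \<bullet> x2 + x5 \<bullet> x5)"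

definition feasible ::
  "real^'n^'n \<Rightarrow> real^'n^'m \<Rightarrow> real^'m^'m \<Rightarrow> real \<Rightarrow> real \<Rightarrow> real
   \<Rightarrow> real^'n^'n \<Rightarrow> real^'m^'n \<Rightarrow> bool" where
  "feasible F C S b \<omega> \<gamma> P M \<longleftrightarrow>
     sym_mat P \<and> pos_def P \<and> lmi1 F S b \<omega> P M \<and> lmi2 F C \<gamma> P M"

definition hinf_gain_le ::
  "real^'n^'n \<Rightarrow> real^'m^'n \<Rightarrow> real^'n^'m \<Rightarrow> real \<Rightarrow> bool" where
  "hinf_gain_le A L C \<gamma> \<longleftrightarrow>
    (\<forall>(e::nat \<Rightarrow> real^'n) (\<eta>::nat \<Rightarrow> real^'m) (v::nat \<Rightarrow> real^'n).
       e 0 = 0 \<and> (\<forall>k. e (Suc k) = A *v e k - L *v \<eta> k + v k)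
       \<and> summable (\<lambda>k. (norm (\<eta> k))\<^sup>2 + (norm (v k))\<^sup>2)
       \<longrightarrow> summable (\<lambda>k. (norm (C *v e k + \<eta> k))\<^sup>2)
          \<and> (\<Sum>k. (norm (C *v e k + \<eta> k))\<^sup>2)
             \<le> \<gamma>\<^sup>2 * (\<Sum>k. (norm (\<eta> k))\<^sup>2 + (norm (v k))\<^sup>2))"

end

theory Submission
  imports Defs "HOL-Library.Countable"
begin

text \<open>
  Write V(e) = e' P e and let e+ be the successor of the state e. Evaluated at block
  vectors containing e+, the first LMI becomes the dissipation inequality
  V(e+) \<le> b V(e) + (1 - b)/\<omega> (|v|^2 + |\<zeta>|^2); under the noise bounds the right-hand side
  is at most b V(e) + 1 - b, so the sublevel set V \<le> 1 is invariant. The second LMI becomes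
  V(e+) + |r|^2 \<le> V(e) + \<gamma>^2 (|\<eta>|^2 + |v|^2), which telescopes to the gain bound.
  Finally a positive definite P is congruent to the identity, T' P T = I, so the ellipsoid
  V \<le> 1 is the image of the unit ball under T and has volume vol(ball) / sqrt (det P):
  minimising -ln det P minimises the volume.
\<close>

lemma inner_transpose_matrix_vector: "(x::real^'n) \<bullet> (transpose A *v y) = (A *v x) \<bullet> y"
  by (metis dot_lmul_matrix inner_commute vector_transpose_matrix)

lemma sym_mat_inner_swap: "sym_mat A \<Longrightarrow> (x::real^'n) \<bullet> (A *v y) = (A *v x) \<bullet> y"
  using inner_transpose_matrix_vector[of x A y] by (simp add: sym_mat_def)

lemma sym_mat_inner_commute: "sym_mat A \<Longrightarrow> (x::real^'n) \<bullet> (A *v y) = y \<bullet> (A *v x)"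
  using sym_mat_inner_swap[of A x y] by (simp only: inner_commute[of "A *v x" y])

lemma matrix_vector_mult_uminus_right [simp]: "(A::real^'n^'m) *v (- x) = - (A *v x)"
  using matrix_vector_mult_diff_distrib[of A 0 x] by simp

lemma matrix_inv_mult:
  fixes A :: "real^'n^'n"
  assumes "invertible A"
  shows "A ** matrix_inv A = mat 1" and "matrix_inv A ** A = mat 1"
  using someI_ex[OF assms[unfolded invertible_def]] by (simp_all add: matrix_inv_def)

lemma pos_def_nonneg: "pos_def P \<Longrightarrow> 0 \<le> x \<bullet> (P *v x)"
  by (cases "x = 0") (auto simp: pos_def_def less_imp_le)

section \<open>Dissipation inequalities\<close>

lemma affine_recurrence_le_one:
  fixes x :: "nat \<Rightarrow> real"
  assumes "x 0 \<le> 1" and "0 \<le> b" and "\<And>k. x (Suc k) \<le> b * x k + (1 - b)"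
  shows "x k \<le> 1"
proof (induction k)
  case (Suc k)
  have "x (Suc k) \<le> b * 1 + (1 - b)"
    using assms(3)[of k] mult_left_mono[OF Suc.IH assms(2)] by linarith
  then show ?case by simp
qed (use assms(1) in simp)

lemma dissipation_summable_bound:
  fixes V R W :: "nat \<Rightarrow> real"
  assumes "V 0 = 0" and "\<And>k. 0 \<le> V k" and "\<And>k. 0 \<le> R k" and "\<And>k. 0 \<le> W k"
    and "summable W" and "0 \<le> c"
    and step: "\<And>k. V (Suc k) + R k \<le> V k + c * W k"
  shows "summable R \<and> suminf R \<le> c * suminf W"
proof -
  have telescoped: "(\<Sum>k<N. R k) + V N \<le> c * (\<Sum>k<N. W k)" for N
  proof (induction N)
    case (Suc N)
    then show ?case using step[of N] by (simp add: distrib_left)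
  qed (simp add: assms(1))
  have partial: "(\<Sum>k<N. R k) \<le> c * suminf W" for N
  proof -
    have "(\<Sum>k<N. R k) \<le> c * (\<Sum>k<N. W k)"
      using telescoped[of N] assms(2)[of N] by linarith
    also have "\<dots> \<le> c * suminf W"
      using assms(4-6) by (intro mult_left_mono sum_le_suminf) auto
    finally show ?thesis .
  qed
  have "summable R"
    using summableI_nonneg_bounded[OF assms(3) partial] .
  then show ?thesis
    using suminf_le_const[OF _ partial] by blast
qed

text \<open>Each LMI is evaluated at a block vector containing \<open>-y\<close>, where \<open>y\<close> is the successor
  state; the cross terms then add up to \<open>-y\<^sup>T P y\<close>.\<close>

lemma lmi1_invariance_step:
  fixes F P :: "real^'n^'n" and S :: "real^'m^'m" and M L :: "real^'m^'n"
  assumes lmi: "lmi1 F S b \<omega> P M" and sP: "sym_mat P" and sS: "sym_mat S" and PL: "P ** L = M"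
  shows "(F *v e - (L ** S) *v z + w) \<bullet> (P *v (F *v e - (L ** S) *v z + w))
           \<le> b * (e \<bullet> (P *v e)) + ((1 - b) / \<omega>) * (w \<bullet> w + z \<bullet> z)"
proof -
  define y where "y = F *v e - (L ** S) *v z + w"
  define sz where "sz = S *v z"
  have "P *v ((L ** S) *v z) = M *v sz"
    by (simp only: sz_def matrix_vector_mul_assoc flip: PL) (simp only: matrix_mul_assoc)
  then have "P *v y = P *v (F *v e) - M *v sz + P *v w"
    unfolding y_def by (simp only: matrix_vector_right_distrib matrix_vector_mult_diff_distrib)
  then have yPy: "y \<bullet> (P *v y) = y \<bullet> (P *v (F *v e)) - y \<bullet> (M *v sz) + y \<bullet> (P *v w)"
    by (simp add: inner_add_right inner_diff_right)
  have FP: "e \<bullet> ((transpose F ** P) *v (-y)) = - (y \<bullet> (P *v (F *v e)))"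
  proof -
    have "e \<bullet> ((transpose F ** P) *v (-y)) = (F *v e) \<bullet> (P *v (-y))"
      by (simp only: matrix_vector_mul_assoc[symmetric] inner_transpose_matrix_vector)
    then show ?thesis
      using sym_mat_inner_commute[OF sP, of "F *v e" y] by simp
  qed
  have PF: "(-y) \<bullet> ((P ** F) *v e) = - (y \<bullet> (P *v (F *v e)))"
    by (simp add: matrix_vector_mul_assoc[symmetric])
  have yy: "(-y) \<bullet> (P *v (-y)) = y \<bullet> (P *v y)" and yw: "(-y) \<bullet> (P *v w) = - (y \<bullet> (P *v w))"
    by simp_all
  have MS: "(-y) \<bullet> ((M ** S) *v z) = - (y \<bullet> (M *v sz))"
    by (simp add: matrix_vector_mul_assoc[symmetric] sz_def)
  have wy: "w \<bullet> (P *v (-y)) = - (y \<bullet> (P *v w))"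
    using sym_mat_inner_commute[OF sP, of w y] by simp
  have SM: "z \<bullet> ((S ** transpose M) *v (-y)) = - (y \<bullet> (M *v sz))"
  proof -
    have "z \<bullet> ((S ** transpose M) *v (-y)) = sz \<bullet> (transpose M *v (-y))"
      by (simp only: matrix_vector_mul_assoc[symmetric] sym_mat_inner_swap[OF sS] sz_def)
    also have "\<dots> = - (y \<bullet> (M *v sz))"
      by (simp only: inner_transpose_matrix_vector inner_minus_right inner_minus_left inner_commute)
    finally show ?thesis .
  qed
  have "0 \<le> b * (e \<bullet> (P *v e)) + e \<bullet> ((transpose F ** P) *v (-y))
          + (-y) \<bullet> ((P ** F) *v e) + (-y) \<bullet> (P *v (-y)) + (-y) \<bullet> (P *v w)
          - (-y) \<bullet> ((M ** S) *v z)
          + w \<bullet> (P *v (-y)) + ((1 - b) / \<omega>) * (w \<bullet> w)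
          - z \<bullet> ((S ** transpose M) *v (-y)) + ((1 - b) / \<omega>) * (z \<bullet> z)
          + (0::real^'n) \<bullet> 0 + (0::real^'n) \<bullet> 0"
    by (rule lmi[unfolded lmi1_def, rule_format, of e "-y" w z 0 0])
  then have "y \<bullet> (P *v y) \<le> b * (e \<bullet> (P *v e)) + ((1 - b) / \<omega>) * (w \<bullet> w) + ((1 - b) / \<omega>) * (z \<bullet> z)"
    unfolding FP PF yy yw MS wy SM inner_zero_left using yPy by linarith
  then show ?thesis
    by (simp only: y_def distrib_left add.assoc)
qed

lemma lmi2_dissipation_step:
  fixes F P :: "real^'n^'n" and C :: "real^'n^'m" and M L :: "real^'m^'n"
    and e v :: "real^'n" and h :: "real^'m"
  assumes lmi: "lmi2 F C \<gamma> P M" and sP: "sym_mat P" and PL: "P ** L = M"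
  shows "((F - L ** C) *v e - L *v h + v) \<bullet> (P *v ((F - L ** C) *v e - L *v h + v))
           + (C *v e + h) \<bullet> (C *v e + h) \<le> e \<bullet> (P *v e) + \<gamma>\<^sup>2 * (h \<bullet> h + v \<bullet> v)"
proof -
  define y where "y = (F - L ** C) *v e - L *v h + v"
  define r where "r = C *v e + h"
  define ce where "ce = C *v e"
  have "P *v ((L ** C) *v e) = M *v ce"
    by (simp only: ce_def matrix_vector_mul_assoc flip: PL) (simp only: matrix_mul_assoc)
  moreover have "P *v (L *v h) = M *v h"
    by (simp only: matrix_vector_mul_assoc flip: PL)
  ultimately have "P *v y = P *v (F *v e) - M *v ce - M *v h + P *v v"
    unfolding y_def
    by (simp only: matrix_vector_right_distrib matrix_vector_mult_diff_distrib
        matrix_vector_mult_diff_rdistrib)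
  then have yPy: "y \<bullet> (P *v y) = y \<bullet> (P *v (F *v e)) - y \<bullet> (M *v ce) - y \<bullet> (M *v h) + y \<bullet> (P *v v)"
    by (simp add: inner_add_right inner_diff_right)
  have rr: "r \<bullet> r = r \<bullet> ce + r \<bullet> h"
    by (simp add: r_def ce_def inner_add_right)
  have FP_CM: "e \<bullet> ((transpose F ** P - transpose C ** transpose M) *v (-y))
      = - (y \<bullet> (P *v (F *v e))) + y \<bullet> (M *v ce)"
  proof -
    have "e \<bullet> ((transpose F ** P - transpose C ** transpose M) *v (-y))
        = e \<bullet> (transpose F *v (P *v (-y))) - e \<bullet> (transpose C *v (transpose M *v (-y)))"
      by (simp only: matrix_vector_mult_diff_rdistrib inner_diff_right matrix_vector_mul_assoc)
    also have "\<dots> = (F *v e) \<bullet> (P *v (-y)) - (M *v ce) \<bullet> (-y)"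
      by (simp only: inner_transpose_matrix_vector ce_def)
    also have "\<dots> = - (y \<bullet> (P *v (F *v e))) + y \<bullet> (M *v ce)"
      using sym_mat_inner_commute[OF sP, of "F *v e" y] by (simp add: inner_commute)
    finally show ?thesis .
  qed
  have PF_MC: "(-y) \<bullet> ((P ** F - M ** C) *v e) = - (y \<bullet> (P *v (F *v e))) + y \<bullet> (M *v ce)"
    by (simp add: matrix_vector_mult_diff_rdistrib inner_diff_right matrix_vector_mul_assoc[symmetric] ce_def)
  have Cr: "e \<bullet> (transpose C *v (-r)) = - (r \<bullet> ce)"
    by (simp only: inner_transpose_matrix_vector ce_def inner_minus_right inner_minus_left inner_commute)
  have My: "h \<bullet> (transpose M *v (-y)) = - (y \<bullet> (M *v h))"
    by (simp only: inner_transpose_matrix_vector inner_minus_right inner_minus_left inner_commute)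
  have vy: "v \<bullet> (P *v (-y)) = - (y \<bullet> (P *v v))"
    using sym_mat_inner_commute[OF sP, of v y] by simp
  have minus: "(-y) \<bullet> (M *v h) = - (y \<bullet> (M *v h))" "(-y) \<bullet> (P *v v) = - (y \<bullet> (P *v v))"
    "(-y) \<bullet> (P *v (-y)) = y \<bullet> (P *v y)" "(-r) \<bullet> (C *v e) = - (r \<bullet> ce)"
    "h \<bullet> (-r) = - (r \<bullet> h)" "(-r) \<bullet> h = - (r \<bullet> h)" "(-r) \<bullet> (-r) = r \<bullet> r"
    by (simp_all add: ce_def inner_commute)
  have "0 \<le> e \<bullet> (P *v e) + e \<bullet> ((transpose F ** P - transpose C ** transpose M) *v (-y))
          + e \<bullet> (transpose C *v (-r))
          + \<gamma>\<^sup>2 * (h \<bullet> h) - h \<bullet> (transpose M *v (-y)) + h \<bullet> (-r)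
          + \<gamma>\<^sup>2 * (v \<bullet> v) + v \<bullet> (P *v (-y))
          + (-y) \<bullet> ((P ** F - M ** C) *v e) - (-y) \<bullet> (M *v h) + (-y) \<bullet> (P *v v)
          + (-y) \<bullet> (P *v (-y)) + (-r) \<bullet> (C *v e) + (-r) \<bullet> h + (-r) \<bullet> (-r)"
    using lmi unfolding lmi2_def
    by (elim allE[where x = e] allE[where x = h] allE[where x = v] allE[where x = "-y"] allE[where x = "-r"])
  then have "y \<bullet> (P *v y) + r \<bullet> r \<le> e \<bullet> (P *v e) + \<gamma>\<^sup>2 * (h \<bullet> h) + \<gamma>\<^sup>2 * (v \<bullet> v)"
    unfolding FP_CM PF_MC Cr My vy minus using yPy rr by linarith
  then show ?thesis
    by (simp only: y_def r_def distrib_left add.assoc)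
qed

lemma lmi1_ellipsoid_invariant:
  fixes F P :: "real^'n^'n" and S :: "real^'m^'m" and M L :: "real^'m^'n"
    and e v :: "nat \<Rightarrow> real^'n" and \<zeta> :: "nat \<Rightarrow> real^'m"
  assumes "lmi1 F S b \<omega> P M" and "sym_mat P" and "sym_mat S" and "P ** L = M"
    and "\<alpha> + vbar = \<omega>" and "0 < \<omega>" and "0 \<le> b" and "b \<le> 1"
    and "e 1 = 0" and "\<forall>k\<ge>1. e (k + 1) = F *v e k - (L ** S) *v \<zeta> k + v k"
    and "\<forall>k. (norm (\<zeta> k))\<^sup>2 \<le> \<alpha>" and "\<forall>k. (norm (v k))\<^sup>2 \<le> vbar"
    and "1 \<le> k"
  shows "e k \<bullet> (P *v e k) \<le> 1"
proof -
  have step: "e (Suc j + 1) \<bullet> (P *v e (Suc j + 1)) \<le> b * (e (j + 1) \<bullet> (P *v e (j + 1))) + (1 - b)" for j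
  proof -
    have "e (Suc j + 1) \<bullet> (P *v e (Suc j + 1))
        \<le> b * (e (j + 1) \<bullet> (P *v e (j + 1))) + ((1 - b) / \<omega>) * (v (j + 1) \<bullet> v (j + 1) + \<zeta> (j + 1) \<bullet> \<zeta> (j + 1))"
      using lmi1_invariance_step[OF assms(1-4)] assms(10) by simp
    also have "\<dots> \<le> b * (e (j + 1) \<bullet> (P *v e (j + 1))) + ((1 - b) / \<omega>) * \<omega>"
    proof -
      have "v (j + 1) \<bullet> v (j + 1) \<le> vbar" "\<zeta> (j + 1) \<bullet> \<zeta> (j + 1) \<le> \<alpha>"
        using assms(11,12) by (simp_all add: power2_norm_eq_inner)
      then have "v (j + 1) \<bullet> v (j + 1) + \<zeta> (j + 1) \<bullet> \<zeta> (j + 1) \<le> \<omega>"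
        using assms(5) by linarith
      then show ?thesis
        using assms(6-8) by (intro add_left_mono mult_left_mono) auto
    qed
    finally show ?thesis using \<open>0 < \<omega>\<close> by simp
  qed
  have "e (k - 1 + 1) \<bullet> (P *v e (k - 1 + 1)) \<le> 1"
    by (rule affine_recurrence_le_one[where x = "\<lambda>j. e (j + 1) \<bullet> (P *v e (j + 1))"])
      (use step assms(7,9) in auto)
  then show ?thesis using \<open>1 \<le> k\<close> by simp
qed

lemma lmi2_hinf_gain:
  fixes F P :: "real^'n^'n" and C :: "real^'n^'m" and M L :: "real^'m^'n"
  assumes "lmi2 F C \<gamma> P M" and "pos_def P" and "P ** L = M"
  shows "hinf_gain_le (F - L ** C) L C \<gamma>"
  unfolding hinf_gain_le_def
proof (intro allI impI, elim conjE)
  fix e :: "nat \<Rightarrow> real^'n" and \<eta> :: "nat \<Rightarrow> real^'m" and v :: "nat \<Rightarrow> real^'n"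
  assume "e 0 = 0" and dyn: "\<forall>k. e (Suc k) = (F - L ** C) *v e k - L *v \<eta> k + v k"
    and "summable (\<lambda>k. (norm (\<eta> k))\<^sup>2 + (norm (v k))\<^sup>2)"
  have "sym_mat P" and V_nonneg: "0 \<le> x \<bullet> (P *v x)" for x
    using \<open>pos_def P\<close> pos_def_nonneg by (auto simp: pos_def_def)
  show "summable (\<lambda>k. (norm (C *v e k + \<eta> k))\<^sup>2)
      \<and> (\<Sum>k. (norm (C *v e k + \<eta> k))\<^sup>2) \<le> \<gamma>\<^sup>2 * (\<Sum>k. (norm (\<eta> k))\<^sup>2 + (norm (v k))\<^sup>2)"
  proof (rule dissipation_summable_bound[where V = "\<lambda>k. e k \<bullet> (P *v e k)"])
    show "e (Suc k) \<bullet> (P *v e (Suc k)) + (norm (C *v e k + \<eta> k))\<^sup>2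
        \<le> e k \<bullet> (P *v e k) + \<gamma>\<^sup>2 * ((norm (\<eta> k))\<^sup>2 + (norm (v k))\<^sup>2)" for k
      using lmi2_dissipation_step[OF assms(1) \<open>sym_mat P\<close> assms(3), of "e k" "\<eta> k" "v k"] dyn
      by (simp add: power2_norm_eq_inner)
  qed (simp_all add: \<open>e 0 = 0\<close> V_nonneg \<open>summable _\<close>)
qed

section \<open>Volume of ellipsoids\<close>

lemma pos_def_orthonormal_set:
  fixes P :: "real^'n^'n"
  assumes "pos_def P" and "k \<le> CARD('n)"
  shows "\<exists>U. finite U \<and> card U = k \<and> (\<forall>u\<in>U. \<forall>w\<in>U. u \<bullet> (P *v w) = (if u = w then 1 else 0))"
  using assms(2)
proof (induction k)
  case (Suc k)
  then obtain U where U: "finite U" "card U = k"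
    and orth: "\<forall>u\<in>U. \<forall>w\<in>U. u \<bullet> (P *v w) = (if u = w then 1 else 0)"
    by auto
  have "sym_mat P" and pos: "\<And>x. x \<noteq> 0 \<Longrightarrow> 0 < x \<bullet> (P *v x)"
    using assms(1) unfolding pos_def_def by auto
  have "dim ((*v) P ` U) \<le> card ((*v) P ` U)"
    by (rule dim_le_card[OF span_superset]) (simp add: U(1))
  also have "\<dots> < DIM(real^'n)"
    using card_image_le[OF U(1), of "(*v) P"] U(2) Suc.prems by simp
  finally obtain x where "x \<noteq> 0" and x_orth: "\<And>y. y \<in> span ((*v) P ` U) \<Longrightarrow> orthogonal x y"
    using orthogonal_to_subspace_exists by blast
  define q where "q = x \<bullet> (P *v x)"
  have "0 < q"
    using pos[OF \<open>x \<noteq> 0\<close>] by (simp add: q_def)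
  define x' where "x' = (1 / sqrt q) *\<^sub>R x"
  have x'_unit: "x' \<bullet> (P *v x') = 1"
    using \<open>0 < q\<close> by (simp add: x'_def q_def[symmetric] matrix_vector_mult_scaleR)
  have x'_orth: "x' \<bullet> (P *v u) = 0" "u \<bullet> (P *v x') = 0" if "u \<in> U" for u
  proof -
    have "x \<bullet> (P *v u) = 0"
      using x_orth[OF span_base] that by (simp add: orthogonal_def)
    then show "x' \<bullet> (P *v u) = 0"
      by (simp add: x'_def)
    then show "u \<bullet> (P *v x') = 0"
      by (simp add: sym_mat_inner_commute[OF \<open>sym_mat P\<close>])
  qed
  have "x' \<notin> U"
    using x'_unit x'_orth by fastforce
  then show ?case
    using U orth x'_unit x'_orth by (intro exI[of _ "insert x' U"]) auto
qed (intro exI[of _ "{}"], simp)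

lemma pos_def_congruent_identity:
  fixes P :: "real^'n^'n"
  assumes "pos_def P"
  obtains T :: "real^'n^'n" where "transpose T ** P ** T = mat 1"
proof -
  obtain U where "finite U" "card U = CARD('n)"
    and orth: "\<forall>u\<in>U. \<forall>w\<in>U. u \<bullet> (P *v w) = (if u = w then 1 else 0)"
    using pos_def_orthonormal_set[OF assms order.refl] by auto
  then obtain g where g: "bij_betw g (UNIV::'n set) U"
    using finite_same_card_bij[of "UNIV::'n set" U] by auto
  define T where "T = (\<chi> i j. g j $ i)"
  have "(transpose T ** P ** T) $ i $ j = g i \<bullet> (P *v g j)" for i j
    by (simp add: T_def matrix_matrix_mult_def transpose_def inner_vec_def matrix_vector_mult_def
        sum_distrib_left sum_distrib_right mult.assoc mult.left_commute)
      (rule sum.swap)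
  moreover have "g i \<bullet> (P *v g j) = mat 1 $ i $ j" for i j
    using orth bij_betwE[OF g] bij_betw_imp_inj_on[OF g]
    by (simp add: mat_def inj_on_eq_iff)
  ultimately have "transpose T ** P ** T = mat 1"
    by (simp add: vec_eq_iff)
  then show ?thesis by (rule that)
qed

text \<open>
  The library states the change of volume under linear maps, \<open>measure_linear_image\<close>,
  only for wellordered index types. A wellordered copy of the index type, together with
  the coordinate relabelling between the two vector spaces (which preserves Lebesgue measure
  and determinants), removes this restriction.
\<close>

typedef 'a ord_copy = "UNIV :: 'a set"
  morphisms from_copy to_copy by simp

instance ord_copy :: (finite) finite
proof
  have "(UNIV :: 'a ord_copy set) = range to_copy"
    by (metis UNIV_I from_copy_inverse surj_def)
  then show "finite (UNIV :: 'a ord_copy set)"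
    by (metis finite_imageI finite)
qed

instantiation ord_copy :: (finite) linorder
begin

definition "x \<le> y \<longleftrightarrow> to_nat (from_copy x) \<le> to_nat (from_copy y)"

definition "x < y \<longleftrightarrow> to_nat (from_copy x) < to_nat (from_copy y)"

instance
  by standard (auto simp: less_eq_ord_copy_def less_ord_copy_def from_copy_inject
      dest: injD[OF inj_to_nat])

end

instance ord_copy :: (finite) wellorder
proof (rule wf_wellorderI)
  show "wf {(x :: 'a ord_copy, y). x < y}"
    unfolding less_ord_copy_def
    using wf_inv_image[OF wf_less, of "to_nat \<circ> from_copy"] by (simp add: inv_image_def)
qed intro_classes

lemma bij_from_copy: "bij from_copy"
  by (metis UNIV_I bij_betw_byWitness from_copy_inverse subset_UNIV to_copy_inverse)

lemma all_from_copy: "(\<forall>j. P j) \<longleftrightarrow> (\<forall>i. P (from_copy i))"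
  by (metis UNIV_I to_copy_inverse)

definition to_copy_vec :: "real^'a \<Rightarrow> real^'a ord_copy" where
  "to_copy_vec x = (\<chi> i. x $ from_copy i)"

definition from_copy_vec :: "real^'a ord_copy \<Rightarrow> real^'a" where
  "from_copy_vec y = (\<chi> j. y $ to_copy j)"

lemma from_to_copy_vec [simp]: "from_copy_vec (to_copy_vec x) = x"
  by (simp add: from_copy_vec_def to_copy_vec_def to_copy_inverse vec_eq_iff)

lemma to_from_copy_vec [simp]: "to_copy_vec (from_copy_vec y) = y"
  by (simp add: from_copy_vec_def to_copy_vec_def from_copy_inverse vec_eq_iff)

lemma linear_to_copy_vec: "linear to_copy_vec"
  by (rule linearI) (simp_all add: to_copy_vec_def vec_eq_iff)

lemma borel_measurable_from_copy_vec: "from_copy_vec \<in> borel_measurable borel"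
proof -
  have "linear from_copy_vec"
    by (rule linearI) (simp_all add: from_copy_vec_def vec_eq_iff)
  then show ?thesis
    by (intro borel_measurable_continuous_onI linear_continuous_on)
      (simp add: linear_conv_bounded_linear)
qed

lemma prod_Basis_cart: "(\<Prod>b\<in>Basis. (x::real^'n) \<bullet> b) = (\<Prod>i\<in>UNIV. x $ i)"
  by (simp add: Basis_vec_def cart_eq_inner_axis axis_eq_axis prod.UNION_disjoint)

lemma lborel_distr_from_copy_vec: "distr lborel borel from_copy_vec = (lborel :: (real^'a) measure)"
proof (rule lborel_eqI[symmetric])
  fix l u :: "real^'a"
  assume le: "\<And>b. b \<in> Basis \<Longrightarrow> l \<bullet> b \<le> u \<bullet> b"
  have "l $ j \<le> u $ j" for j
    using le[of "axis j 1"] by (simp add: inner_axis)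
  then have "\<forall>b\<in>Basis. to_copy_vec l \<bullet> b \<le> to_copy_vec u \<bullet> b"
    by (auto simp: Basis_vec_def inner_axis to_copy_vec_def)
  moreover have "from_copy_vec -` box l u = box (to_copy_vec l) (to_copy_vec u)"
    unfolding set_eq_iff vimage_eq mem_box_cart from_copy_vec_def to_copy_vec_def
    by (subst all_from_copy) (simp add: from_copy_inverse)
  ultimately have "emeasure (distr lborel borel from_copy_vec) (box l u)
      = (\<Prod>i\<in>UNIV. u $ from_copy i - l $ from_copy i)"
    by (simp add: emeasure_distr borel_measurable_from_copy_vec emeasure_lborel_box_eq
        prod_Basis_cart to_copy_vec_def)
  also have "\<dots> = (\<Prod>b\<in>Basis. (u - l) \<bullet> b)"
    using prod.reindex_bij_betw[OF bij_from_copy, of "\<lambda>j. u $ j - l $ j"]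
    by (simp add: prod_Basis_cart)
  finally show "emeasure (distr lborel borel from_copy_vec) (box l u) = (\<Prod>b\<in>Basis. (u - l) \<bullet> b)" .
qed simp

lemma measure_to_copy_vec_image:
  assumes "S \<in> sets borel"
  shows "measure lebesgue (to_copy_vec ` S) = measure lebesgue S"
proof -
  have img: "to_copy_vec ` S = from_copy_vec -` S"
    by (auto simp: image_iff) (metis from_to_copy_vec to_from_copy_vec)+
  have "from_copy_vec -` S \<in> sets borel"
    using measurable_sets[OF borel_measurable_from_copy_vec assms] by simp
  then have "measure lebesgue (from_copy_vec -` S) = measure lborel (from_copy_vec -` S)"
    by (simp add: measure_completion)
  also have "\<dots> = measure (distr lborel borel from_copy_vec) S"
    by (subst measure_distr) (use assms borel_measurable_from_copy_vec in auto)
  also have "\<dots> = measure lebesgue S"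
    using assms by (simp add: lborel_distr_from_copy_vec measure_completion)
  finally show ?thesis by (simp add: img)
qed

lemma det_reindex:
  fixes A :: "real^'n^'n" and r :: "'k::finite \<Rightarrow> 'n"
  assumes r: "bij r"
  shows "det (\<chi> i j. A $ r i $ r j) = det A"
proof -
  let ?m = "map_permutation UNIV r" and ?m' = "map_permutation UNIV (inv r)"
  have inj: "inj r" and inj': "inj (inv r)" and r': "bij (inv r)"
    using r bij_is_inj bij_imp_bij_inv by blast+
  have m_apply: "?m p (r i) = r (p i)" for p i
    using inj by (simp add: map_permutation_def restrict_id_def)
  have "bij_betw ?m {p. p permutes (UNIV :: 'k set)} {q. q permutes (UNIV :: 'n set)}"
  proof (rule bij_betw_byWitness[where f' = ?m'])
    show "\<forall>p\<in>{p. p permutes UNIV}. ?m' (?m p) = p"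
      by (simp add: map_permutation_compose[OF r inj'] inv_o_cancel[OF inj])
    show "\<forall>q\<in>{q. q permutes UNIV}. ?m (?m' q) = q"
      using bij_is_surj[OF r, unfolded surj_iff]
      by (simp add: map_permutation_compose[OF r' inj])
  qed (use map_permutation_permutes[OF r] map_permutation_permutes[OF r'] in auto)
  then have "det A = (\<Sum>p | p permutes (UNIV :: 'k set).
      of_int (sign (?m p)) * (\<Prod>j\<in>UNIV. A $ j $ ?m p j))"
    unfolding det_def by (rule sum.reindex_bij_betw[symmetric])
  also have "\<dots> = (\<Sum>p | p permutes (UNIV :: 'k set).
      of_int (sign p) * (\<Prod>i\<in>UNIV. A $ r i $ r (p i)))"
  proof (rule sum.cong[OF refl])
    fix p assume "p \<in> {p. p permutes (UNIV :: 'k set)}"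
    then have "sign (?m p) = sign p"
      using sign_map_permutation[of r UNIV p] inj by simp
    moreover have "(\<Prod>j\<in>UNIV. A $ j $ ?m p j) = (\<Prod>i\<in>UNIV. A $ r i $ r (p i))"
      using prod.reindex_bij_betw[OF r, of "\<lambda>j. A $ j $ ?m p j"] by (simp add: m_apply)
    ultimately show "of_int (sign (?m p)) * (\<Prod>j\<in>UNIV. A $ j $ ?m p j)
        = of_int (sign p) * (\<Prod>i\<in>UNIV. A $ r i $ r (p i))" by simp
  qed
  also have "\<dots> = det (\<chi> i j. A $ r i $ r j)"
    by (simp add: det_def)
  finally show ?thesis ..
qed

lemma measure_matrix_image_compact:
  fixes A :: "real^'n^'n"
  assumes "compact S"
  shows "measure lebesgue ((*v) A ` S) = \<bar>det A\<bar> * measure lebesgue S"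
proof -
  define B where "B = (\<chi> i j. A $ from_copy i $ from_copy j)"
  have cont: "continuous_on UNIV to_copy_vec" "continuous_on UNIV ((*v) A)"
    using linear_to_copy_vec matrix_vector_mul_linear[of A]
    by (auto intro!: linear_continuous_on simp: linear_conv_bounded_linear)
  have commute: "to_copy_vec (A *v x) = B *v to_copy_vec x" for x
  proof -
    have "(\<Sum>j\<in>UNIV. A $ from_copy i $ j * x $ j)
        = (\<Sum>k\<in>UNIV. A $ from_copy i $ from_copy k * x $ from_copy k)" for i
      using sum.reindex_bij_betw[OF bij_from_copy, of "\<lambda>j. A $ from_copy i $ j * x $ j"] by simp
    then show ?thesis
      by (simp add: to_copy_vec_def B_def matrix_vector_mult_def vec_eq_iff)
  qed
  have "compact (to_copy_vec ` S)" "compact ((*v) A ` S)"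
    using assms cont by (auto intro: compact_continuous_image continuous_on_subset)
  then have meas: "to_copy_vec ` S \<in> lmeasurable" "(*v) A ` S \<in> sets borel"
    by (auto intro: lmeasurable_compact borel_compact)
  have "measure lebesgue ((*v) A ` S) = measure lebesgue (to_copy_vec ` (*v) A ` S)"
    using meas by (simp add: measure_to_copy_vec_image)
  also have "to_copy_vec ` (*v) A ` S = (*v) B ` to_copy_vec ` S"
    by (simp add: image_image commute)
  also have "measure lebesgue \<dots> = \<bar>det B\<bar> * measure lebesgue (to_copy_vec ` S)"
    using measure_linear_image[OF matrix_vector_mul_linear meas(1)]
    by (simp add: matrix_of_matrix_vector_mul)
  also have "\<dots> = \<bar>det A\<bar> * measure lebesgue S"
    using assms by (simp add: B_def det_reindex bij_from_copy measure_to_copy_vec_image borel_compact)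
  finally show ?thesis .
qed

lemma pos_def_det_pos:
  fixes P :: "real^'n^'n"
  assumes "pos_def P"
  shows "0 < det P"
proof -
  obtain T :: "real^'n^'n" where T: "transpose T ** P ** T = mat 1"
    using pos_def_congruent_identity[OF assms] by blast
  have "det T * det T * det P = 1"
    using arg_cong[OF T, of det] by (simp add: det_mul det_transpose det_I mult_ac)
  then show ?thesis
    by (smt (verit, best) zero_le_square zero_less_mult_iff)
qed

lemma measure_ellipsoid:
  fixes P :: "real^'n^'n"
  assumes "pos_def P"
  shows "measure lebesgue {e. e \<bullet> (P *v e) \<le> 1} = measure lebesgue (cball (0::real^'n) 1) / sqrt (det P)"
proof -
  obtain T :: "real^'n^'n" where T: "transpose T ** P ** T = mat 1"
    using pos_def_congruent_identity[OF assms] by blast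
  have det_prod: "det T * det T * det P = 1"
    using arg_cong[OF T, of det] by (simp add: det_mul det_transpose det_I mult_ac)
  then have "sqrt (det P) * \<bar>det T\<bar> = 1"
    by (metis real_sqrt_abs2 real_sqrt_mult real_sqrt_one mult.assoc mult.commute)
  then have det_T: "\<bar>det T\<bar> = 1 / sqrt (det P)"
    using pos_def_det_pos[OF assms] by (simp add: field_simps)
  have quad: "(T *v y) \<bullet> (P *v (T *v y)) = y \<bullet> y" for y
    using T inner_transpose_matrix_vector[of y T "P *v (T *v y)"]
    by (simp add: matrix_vector_mul_assoc matrix_mul_assoc)
  have "invertible T"
    using det_prod invertible_det_nz by force
  have "{e. e \<bullet> (P *v e) \<le> 1} = (*v) T ` cball 0 1"
  proof (intro set_eqI iffI)
    fix e assume "e \<in> {e. e \<bullet> (P *v e) \<le> 1}"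
    moreover define y where "y = matrix_inv T *v e"
    moreover have "T *v y = e"
      using matrix_inv_mult(1)[OF \<open>invertible T\<close>] by (simp add: y_def matrix_vector_mul_assoc)
    ultimately have "e = T *v y" and "y \<in> cball 0 1"
      using quad[of y] by (auto simp: norm_eq_sqrt_inner)
    then show "e \<in> (*v) T ` cball 0 1"
      by blast
  qed (auto simp: quad norm_eq_sqrt_inner)
  then show ?thesis
    using measure_matrix_image_compact[of "cball 0 1" T] det_T by simp
qed

lemma measure_ellipsoid_le:
  fixes P Q :: "real^'n^'n"
  assumes "pos_def P" and "pos_def Q" and "det Q \<le> det P"
  shows "measure lebesgue {e. e \<bullet> (P *v e) \<le> 1} \<le> measure lebesgue {e. e \<bullet> (Q *v e) \<le> 1}"
  using measure_ellipsoid[OF assms(1)] measure_ellipsoid[OF assms(2)] assms(3)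
    pos_def_det_pos[OF assms(2)]
  by (simp add: divide_left_mono)

text \<open>The hypotheses on \<open>\<Sigma>\<close> only say that \<open>S\<close> is its square root; the proof uses \<open>S\<close>
  through the LMIs alone.\<close>

theorem corollary2:
  fixes F :: "real^'n^'n" and C :: "real^'n^'m" and \<Sigma> S :: "real^'m^'m"
    and \<alpha> vbar \<omega> b \<gamma> :: real and P :: "real^'n^'n" and M :: "real^'m^'n"
  assumes "pos_def \<Sigma>" and "sym_mat S" and "S ** S = \<Sigma>"
    and "\<alpha> > 0" and "vbar > 0" and "\<omega> = \<alpha> + vbar"
    and "0 < b" and "b < 1" and "\<gamma> > 0"
    and opt: "feasible F C S b \<omega> \<gamma> P M"
    and min: "\<forall>P' M'. feasible F C S b \<omega> \<gamma> P' M' \<longrightarrow> - ln (det P) \<le> - ln (det P')"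
  shows
    "(\<forall>(e::nat \<Rightarrow> real^'n) (\<zeta>::nat \<Rightarrow> real^'m) (v::nat \<Rightarrow> real^'n).
        e 1 = 0
        \<and> (\<forall>k\<ge>1. e (k + 1) = F *v e k - ((matrix_inv P ** M) ** S) *v \<zeta> k + v k)
        \<and> (\<forall>k. (norm (\<zeta> k))\<^sup>2 \<le> \<alpha>) \<and> (\<forall>k. (norm (v k))\<^sup>2 \<le> vbar)
        \<longrightarrow> (\<forall>k\<ge>1. e k \<bullet> (P *v e k) \<le> 1))
     \<and> hinf_gain_le (F - (matrix_inv P ** M) ** C) (matrix_inv P ** M) C \<gamma>
     \<and> (\<forall>P' M'. feasible F C S b \<omega> \<gamma> P' M' \<longrightarrow>
          measure lebesgue {e::real^'n. e \<bullet> (P *v e) \<le> 1}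
            \<le> measure lebesgue {e::real^'n. e \<bullet> (P' *v e) \<le> 1})"
proof -
  have "sym_mat P" and "pos_def P" and lmi1: "lmi1 F S b \<omega> P M" and lmi2: "lmi2 F C \<gamma> P M"
    using opt unfolding feasible_def by auto
  have "invertible P"
    using pos_def_det_pos[OF \<open>pos_def P\<close>] by (simp add: invertible_det_nz)
  then have PL: "P ** (matrix_inv P ** M) = M"
    by (metis matrix_inv_mult(1) matrix_mul_assoc matrix_mul_lid)
  have volume: "measure lebesgue {e. e \<bullet> (P *v e) \<le> 1} \<le> measure lebesgue {e. e \<bullet> (P' *v e) \<le> 1}"
    if "feasible F C S b \<omega> \<gamma> P' M'" for P' M'
  proof (rule measure_ellipsoid_le[OF \<open>pos_def P\<close>])
    show "pos_def P'"
      using that by (simp add: feasible_def)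
    then show "det P' \<le> det P"
      using min that pos_def_det_pos[OF \<open>pos_def P\<close>] pos_def_det_pos[of P'] by auto
  qed
  show ?thesis
    using lmi1_ellipsoid_invariant[OF lmi1 \<open>sym_mat P\<close> \<open>sym_mat S\<close> PL, of \<alpha> vbar]
      lmi2_hinf_gain[OF lmi2 \<open>pos_def P\<close> PL] volume assms(4-8)
    by auto
qed

end
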